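(* Assume each $f_i$ is $\mu$-strongly convex with $\mu>0$ and has $L$-Lipschitz gradient, let $x^*$ be the minimiser of $F=f+h$, and run SAGA with step size $\gamma=\frac{1}{2(\mu n+L)}$ starting from $x^0$ with $\phi_i^0=x^0$ for all $i$. Then for all $k\ge0$, \[ \mathbb{E}\Vert x^{k}-x^{*}\Vert^{2}\leq\left(1-\frac{\mu}{2(\mu n+L)}\right)^{k}\left[\Vert x^{0}-x^{*}\Vert^{2} + \frac{n}{\mu n + L}\left[f(x^{0}) -\langle f'(x^{*}),x^{0}-x^{*}\rangle -f(x^{*})\right]\right], \] where the expectation is over all random index choices up to step $k$.
   Context: Setting: $f(x)=\frac1n\sum_{i=1}^n f_i(x)$ with each $f_i\colon\mathbb{R}^d\to\mathbb{R}$ convex and differentiable with $L$-Lipschitz gradient $f_i'$; $h\colon\mathbb{R}^d\to\mathbb{R}\cup\{+\infty\}$ is proper, closed, convex; $F=f+h$. The proximal operator is $\mathrm{prox}^h_\gamma(y)=\operatorname{argmin}_{x}\{h(x)+\frac{1}{2\gamma}\Vert x-y\Vert^2\}$. SAGA algorithm with step size $\gamma>0$: start from $x^0\in\mathbb{R}^d$ and $\phi_i^0=x^0$ for all $i$. At iteration $k+1$, given $x^k$ and $\phi_1^k,\dots,\phi_n^k$: pick $j$ uniformly at random from $\{1,\dots,n\}$ (independently of the past); set $\phi_j^{k+1}=x^k$ and $\phi_i^{k+1}=\phi_i^k$ for $i\neq j$; set $w^{k+1}=x^k-\gamma\big[f_j'(\phi_j^{k+1})-f_j'(\phi_j^k)+\frac1n\sum_{i=1}^n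 f_i'(\phi_i^k)\big]$ and $x^{k+1}=\mathrm{prox}^h_\gamma(w^{k+1})$. *)

theory Defs
  imports "HOL-Analysis.Analysis"
begin

definition strongly_convex :: "real \<Rightarrow> ('a::real_normed_vector \<Rightarrow> real) \<Rightarrow> bool" where
  "strongly_convex \<mu> g \<longleftrightarrow>
     (\<forall>x y t. 0 \<le> t \<and> t \<le> 1 \<longrightarrow>
        g (t *\<^sub>R x + (1 - t) *\<^sub>R y) \<le> t * g x + (1 - t) * g y - \<mu> / 2 * t * (1 - t) * (norm (x - y))\<^sup>2)"

definition proper_fun :: "('a \<Rightarrow> ereal) \<Rightarrow> bool" where
  "proper_fun h \<longleftrightarrow> (\<forall>x. h x \<noteq> -\<infinity>) \<and> (\<exists>x. h x \<noteq> \<infinity>)"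

definition closed_fun :: "('a::topological_space \<Rightarrow> ereal) \<Rightarrow> bool" where
  "closed_fun h \<longleftrightarrow> closed {(x, r::real). h x \<le> ereal r}"

definition convex_fun :: "('a::real_vector \<Rightarrow> ereal) \<Rightarrow> bool" where
  "convex_fun h \<longleftrightarrow>
     (\<forall>x y t. 0 \<le> t \<and> t \<le> 1 \<longrightarrow>
        h (t *\<^sub>R x + (1 - t) *\<^sub>R y) \<le> ereal t * h x + ereal (1 - t) * h y)"

text \<open>Proximal operator: the (unique, under the standing assumptions) minimiser.\<close>
definition prox :: "('a::real_normed_vector \<Rightarrow> ereal) \<Rightarrow> real \<Rightarrow> 'a \<Rightarrow> 'a" where
  "prox h \<gamma> y = (THE x. \<forall>z. h x + ereal ((norm (x - y))\<^sup>2 / (2 * \<gamma>))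
                              \<le> h z + ereal ((norm (z - y))\<^sup>2 / (2 * \<gamma>)))"

text \<open>One SAGA iteration with sampled index j (indices are 0..n-1). State = (x, phi).
  g i is the gradient f_i'.\<close>
definition saga_step ::
  "nat \<Rightarrow> (nat \<Rightarrow> 'a \<Rightarrow> 'a::real_normed_vector) \<Rightarrow> ('a \<Rightarrow> ereal) \<Rightarrow> real
     \<Rightarrow> 'a \<times> (nat \<Rightarrow> 'a) \<Rightarrow> nat \<Rightarrow> 'a \<times> (nat \<Rightarrow> 'a)" where
  "saga_step n g h \<gamma> st j =
     (let x = fst st; \<phi> = snd st; \<phi>' = \<phi>(j := x);
          w = x - \<gamma> *\<^sub>R (g j (\<phi>' j) - g j (\<phi> j) + (1 / real n) *\<^sub>R (\<Sum>i<n. g i (\<phi> i)))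
      in (prox h \<gamma> w, \<phi>'))"

text \<open>SAGA run along the index sequence js (js ! 0 is the index chosen at iteration 1),
  starting from x0 with phi_i^0 = x0.\<close>
definition saga_run ::
  "nat \<Rightarrow> (nat \<Rightarrow> 'a \<Rightarrow> 'a::real_normed_vector) \<Rightarrow> ('a \<Rightarrow> ereal) \<Rightarrow> real \<Rightarrow> 'a
     \<Rightarrow> nat list \<Rightarrow> 'a \<times> (nat \<Rightarrow> 'a)" where
  "saga_run n g h \<gamma> x0 js = foldl (saga_step n g h \<gamma>) (x0, \<lambda>_. x0) js"

text \<open>Expectation over k i.i.d. uniform indices from {0..<n}: uniform average over all
  index sequences of length k.\<close>
definition index_seqs :: "nat \<Rightarrow> nat \<Rightarrow> nat list set" where
  "index_seqs n k = {js. length js = k \<and> set js \<subseteq> {..<n}}"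

definition expect_seq :: "nat \<Rightarrow> nat \<Rightarrow> (nat list \<Rightarrow> real) \<Rightarrow> real" where
  "expect_seq n k X = (\<Sum>js\<in>index_seqs n k. X js) / real n ^ k"

end

theory Submission
  imports Defs
begin

text \<open>Following Defazio, Bach and Lacoste-Julien, the Lyapunov function
  \<open>T(x, \<phi>) = (1/n) \<Sum>\<^sub>i B\<^sub>i(\<phi>\<^sub>i) + c \<parallel>x - x*\<parallel>\<^sup>2\<close>, with \<open>B\<^sub>i\<close> the Bregman divergence of \<open>f\<^sub>i\<close> at
  \<open>x*\<close>, contracts by the factor \<open>1 - \<gamma>\<mu>\<close> in expectation over each SAGA step. The proximal
  step is controlled by nonexpansiveness of \<open>prox\<close> around its fixed point
  \<open>x* = prox (x* - \<gamma> f'(x*))\<close>, the second moment of the SAGA direction by a weighted Young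
  inequality, and the cross terms by co-coercivity of the shifted gradients \<open>f\<^sub>i' - \<mu> I\<close>.
  Since \<open>T \<ge> c \<parallel>x - x*\<parallel>\<^sup>2\<close> and \<open>1/c \<le> n/(\<mu>n + L)\<close>, iterating gives the bound.\<close>

lemma norm_add_square:
  fixes a b :: "'a::real_inner"
  shows "(norm (a + b))\<^sup>2 = (norm a)\<^sup>2 + 2 * (a \<bullet> b) + (norm b)\<^sup>2"
  by (simp add: power2_norm_eq_inner inner_add_left inner_add_right inner_commute)

lemma norm_diff_square:
  fixes a b :: "'a::real_inner"
  shows "(norm (a - b))\<^sup>2 = (norm a)\<^sup>2 - 2 * (a \<bullet> b) + (norm b)\<^sup>2"
  by (simp add: power2_norm_eq_inner inner_diff_left inner_diff_right inner_commute)

lemma le_of_forall_le_add_mult: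
  fixes A B C :: real
  assumes "\<And>t. 0 < t \<Longrightarrow> t \<le> 1 \<Longrightarrow> A \<le> B + t * C"
  shows "A \<le> B"
proof (rule ccontr)
  assume "\<not> A \<le> B"
  then have AB: "B < A" by simp
  show False
  proof (cases "C \<le> 0")
    case True
    then show False using assms[of 1] AB by simp
  next
    case False
    define t where "t = min 1 ((A - B) / (2 * C))"
    have "0 < t" using AB False by (simp add: t_def)
    have "t * C \<le> (A - B) / (2 * C) * C"
      unfolding t_def using False by (intro mult_right_mono) auto
    also have "\<dots> = (A - B) / 2" using False by simp
    finally show False using assms[of t] \<open>0 < t\<close> AB by (simp add: t_def)
  qed
qed

lemma le_of_forall_quadratic_le:
  fixes E R K :: real
  assumes "0 \<le> K" "0 \<le> R" and quad: "\<And>t. t * R - K * t\<^sup>2 / 2 * R \<le> E"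
  shows "R \<le> 2 * K * E"
proof (cases "K = 0")
  case True
  have "R = 0"
  proof (rule ccontr)
    assume "R \<noteq> 0"
    with \<open>0 \<le> R\<close> have "0 < R" by simp
    then show False using quad[of "(\<bar>E\<bar> + 1) / R"] True by simp
  qed
  then show ?thesis using True by simp
next
  case False
  with \<open>0 \<le> K\<close> have "0 < K" by simp
  have "R / (2 * K) \<le> E"
    using quad[of "1 / K"] \<open>0 < K\<close> by (simp add: power2_eq_square field_simps)
  then show ?thesis using \<open>0 < K\<close> by (simp add: field_simps)
qed

lemma le_of_square_le_affine:
  fixes u A B :: real
  assumes "0 \<le> u" "0 \<le> A" "0 \<le> B" "u\<^sup>2 \<le> A + B * u"
  shows "u \<le> 1 + A + B"
proof (cases "u \<le> 1")
  case False
  then have "u * u \<le> (A + B) * u"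
    using assms mult_le_cancel_left1[of A u] by (simp add: power2_eq_square distrib_right)
  then show ?thesis using False assms by simp
qed (use assms in simp)

section \<open>Smooth and strongly convex functions\<close>

lemma has_real_derivative_along_line:
  fixes F :: "'a::real_inner \<Rightarrow> real"
  assumes "(F has_derivative (\<lambda>v. G \<bullet> v)) (at (x + t *\<^sub>R d))"
  shows "((\<lambda>s. F (x + s *\<^sub>R d)) has_real_derivative (G \<bullet> d)) (at t)"
proof -
  have "((\<lambda>s. x + s *\<^sub>R d) has_derivative (\<lambda>s. s *\<^sub>R d)) (at t)"
    by (auto intro!: derivative_eq_intros)
  from has_derivative_compose[OF this assms]
  show ?thesis by (simp add: o_def has_field_derivative_def mult_commute_abs)
qed

lemma strongly_convex_gradient_lower_bound:
  fixes F :: "'a::real_inner \<Rightarrow> real"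
  assumes sc: "strongly_convex \<mu> F" and der: "(F has_derivative (\<lambda>v. G \<bullet> v)) (at x)"
  shows "F x + G \<bullet> (y - x) + \<mu> / 2 * (norm (y - x))\<^sup>2 \<le> F y"
proof -
  define d where "d = y - x"
  define p where "p s = F (x + s *\<^sub>R d)" for s
  define bound where "bound s = F y - F x - \<mu> / 2 * (1 - s) * (norm d)\<^sup>2" for s
  have "(p has_real_derivative (G \<bullet> d)) (at 0)"
    unfolding p_def using has_real_derivative_along_line[of F G x 0 d] der by simp
  then have slope: "((\<lambda>s. (p s - p 0) / (s - 0)) \<longlongrightarrow> G \<bullet> d) (at_right 0)"
    unfolding has_field_derivative_iff by (rule tendsto_mono[OF at_le, rotated]) auto
  have "(bound \<longlongrightarrow> bound 0) (at_right 0)"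
    unfolding bound_def by (intro tendsto_intros)
  moreover have "\<forall>\<^sub>F s in at_right 0. (p s - p 0) / (s - 0) \<le> bound s"
    unfolding eventually_at_right_field
  proof (intro exI[of _ 1] conjI allI impI)
    fix s :: real assume "0 < s" "s < 1"
    have "x + s *\<^sub>R d = s *\<^sub>R y + (1 - s) *\<^sub>R x"
      by (simp add: d_def algebra_simps)
    moreover have "F (s *\<^sub>R y + (1 - s) *\<^sub>R x)
        \<le> s * F y + (1 - s) * F x - \<mu> / 2 * s * (1 - s) * (norm (y - x))\<^sup>2"
      using sc \<open>0 < s\<close> \<open>s < 1\<close> unfolding strongly_convex_def by auto
    ultimately have "p s - p 0 \<le> s * bound s"
      unfolding p_def bound_def d_def by (simp add: algebra_simps)
    then show "(p s - p 0) / (s - 0) \<le> bound s"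
      using \<open>0 < s\<close> by (simp add: pos_divide_le_eq mult.commute)
  qed simp
  ultimately have "G \<bullet> d \<le> bound 0"
    using tendsto_le[OF trivial_limit_at_right_real _ slope] by blast
  then show ?thesis by (simp add: bound_def d_def)
qed

lemma lipschitz_gradient_upper_bound:
  fixes F :: "'a::real_inner \<Rightarrow> real"
  assumes der: "\<And>z. (F has_derivative (\<lambda>v. G z \<bullet> v)) (at z)"
    and lip: "\<And>a b. norm (G a - G b) \<le> L * norm (a - b)"
  shows "F y \<le> F x + G x \<bullet> (y - x) + L / 2 * (norm (y - x))\<^sup>2"
proof -
  define d where "d = y - x"
  define p where "p s = F (x + s *\<^sub>R d) - s * (G x \<bullet> d) - L / 2 * s\<^sup>2 * (norm d)\<^sup>2" for s
  define p' where "p' s = (G (x + s *\<^sub>R d) - G x) \<bullet> d - L * s * (norm d)\<^sup>2" for s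
  have "DERIV p s :> p' s" for s
    unfolding p_def p'_def
    by (rule derivative_eq_intros has_real_derivative_along_line der refl)+
      (simp add: power2_eq_square algebra_simps inner_diff_left)
  then obtain z where z: "0 < z" "z < 1" "p 1 - p 0 = (1 - 0) * p' z"
    using MVT2[of 0 1 p p'] by auto
  have "p' z \<le> norm (G (x + z *\<^sub>R d) - G x) * norm d - L * z * (norm d)\<^sup>2"
    unfolding p'_def using norm_cauchy_schwarz by simp
  also have "\<dots> \<le> L * norm (z *\<^sub>R d) * norm d - L * z * (norm d)\<^sup>2"
    using lip[of "x + z *\<^sub>R d" x] by (intro diff_right_mono mult_right_mono) auto
  also have "\<dots> = 0" using z by (simp add: power2_eq_square)
  finally have "p 1 \<le> p 0" using z by simp
  then show ?thesis by (simp add: p_def d_def)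
qed

text \<open>Co-coercivity of the gradient of \<open>F - m/2 \<parallel>.\<parallel>\<^sup>2\<close>, which is convex and \<open>(L - m)\<close>-smooth:
  evaluate the upper bound at \<open>y - t r\<close> and optimise over \<open>t\<close>.\<close>
lemma cocoercive_shifted_gradient:
  fixes F :: "'a::real_inner \<Rightarrow> real"
  assumes lower: "\<And>a b. F a + G a \<bullet> (b - a) + \<mu> / 2 * (norm (b - a))\<^sup>2 \<le> F b"
    and upper: "\<And>a b. F b \<le> F a + G a \<bullet> (b - a) + L / 2 * (norm (b - a))\<^sup>2"
    and "m \<le> \<mu>" "m \<le> L"
  shows "(norm (G y - G x - m *\<^sub>R (y - x)))\<^sup>2
           \<le> 2 * (L - m) * (F y - F x - G x \<bullet> (y - x) - m / 2 * (norm (y - x))\<^sup>2)"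
proof (rule le_of_forall_quadratic_le)
  fix t
  define e where "e = y - x"
  define r where "r = G y - G x - m *\<^sub>R e"
  define R where "R = (norm r)\<^sup>2"
  have up: "F (y - t *\<^sub>R r) \<le> F y - t * (G y \<bullet> r) + L / 2 * (t\<^sup>2 * R)"
    using upper[where a=y and b="y - t *\<^sub>R r"] by (simp add: R_def power_mult_distrib)
  have "m / 2 * (norm (e - t *\<^sub>R r))\<^sup>2 \<le> \<mu> / 2 * (norm (e - t *\<^sub>R r))\<^sup>2"
    using \<open>m \<le> \<mu>\<close> by (intro mult_right_mono) auto
  then have "F x + G x \<bullet> (e - t *\<^sub>R r) + m / 2 * (norm (e - t *\<^sub>R r))\<^sup>2 \<le> F (y - t *\<^sub>R r)"
    using lower[where a=x and b="y - t *\<^sub>R r"] by (simp add: e_def algebra_simps)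
  moreover have "G x \<bullet> (e - t *\<^sub>R r) = G x \<bullet> e - t * (G x \<bullet> r)"
    by (simp add: inner_diff_right)
  moreover have "m / 2 * (norm (e - t *\<^sub>R r))\<^sup>2
      = m / 2 * (norm e)\<^sup>2 - t * m * (e \<bullet> r) + m / 2 * (t\<^sup>2 * R)"
    by (simp add: norm_diff_square R_def power_mult_distrib algebra_simps)
  moreover have "t * R = t * (G y \<bullet> r) - t * (G x \<bullet> r) - t * m * (e \<bullet> r)"
    by (simp add: R_def power2_norm_eq_inner r_def inner_diff_left algebra_simps)
  moreover have "(L - m) * t\<^sup>2 / 2 * R = L / 2 * (t\<^sup>2 * R) - m / 2 * (t\<^sup>2 * R)"
    by (simp add: field_simps)
  ultimately show "t * R - (L - m) * t\<^sup>2 / 2 * R \<le> F y - F x - G x \<bullet> e - m / 2 * (norm e)\<^sup>2"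
    using up by linarith
qed (use \<open>m \<le> L\<close> in auto)

lemma strong_convexity_le_smoothness:
  fixes F :: "'a::euclidean_space \<Rightarrow> real"
  assumes "\<And>a b. F a + G a \<bullet> (b - a) + \<mu> / 2 * (norm (b - a))\<^sup>2 \<le> F b"
    and "\<And>a b. F b \<le> F a + G a \<bullet> (b - a) + L / 2 * (norm (b - a))\<^sup>2"
  shows "\<mu> \<le> L"
proof -
  obtain e :: 'a where "e \<in> Basis" using nonempty_Basis by blast
  then have "norm e = 1" by simp
  then show ?thesis using assms[where a=0 and b=e] by simp
qed

section \<open>The proximal operator\<close>

lemma subgradient_monotone:
  fixes q1 q2 s1 s2 :: "'a::real_inner"
  assumes "a1 + s1 \<bullet> (q2 - q1) \<le> a2" and "a2 + s2 \<bullet> (q1 - q2) \<le> a1"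
  shows "0 \<le> (s1 - s2) \<bullet> (q1 - q2)"
proof -
  have "s1 \<bullet> (q2 - q1) = - (s1 \<bullet> (q1 - q2))"
    by (simp add: inner_diff_right)
  with assms show ?thesis by (simp add: inner_diff_left)
qed

lemma norm_le_of_square_le_inner:
  fixes d w :: "'a::real_inner"
  assumes "(norm d)\<^sup>2 \<le> w \<bullet> d"
  shows "norm d \<le> norm w"
proof -
  have "norm d * norm d \<le> norm w * norm d"
    using assms norm_cauchy_schwarz[of w d] by (simp add: power2_eq_square)
  then show ?thesis by (cases "norm d = 0") (auto simp: mult_le_cancel_right)
qed

text \<open>\<open>s\<close> is a subgradient of \<open>h\<close> at \<open>xs\<close>; this affine minorant is what makes the
  proximal objective coercive.\<close>
locale prox_subgradient =
  fixes h :: "'a::euclidean_space \<Rightarrow> ereal" and \<gamma> :: real and xs s :: 'a and hxs :: real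
  assumes closed: "closed_fun h" and convex: "convex_fun h" and gamma_pos: "0 < \<gamma>"
    and value_at: "h xs = ereal hxs"
    and subgradient: "\<And>z. ereal (hxs + s \<bullet> (z - xs)) \<le> h z"
begin

definition objective :: "'a \<Rightarrow> 'a \<Rightarrow> ereal" where
  "objective y z = h z + ereal ((norm (z - y))\<^sup>2 / (2 * \<gamma>))"

lemma not_minf: "h z \<noteq> -\<infinity>"
  using subgradient[of z] by auto

lemma bounded_sublevel_epigraph:
  "bounded {(z, r). h z \<le> ereal r \<and> r + (norm (z - y))\<^sup>2 / (2 * \<gamma>) \<le> C}"
proof -
  define A where "A = 2 * \<gamma> * \<bar>C - hxs - s \<bullet> (y - xs)\<bar>"
  define B where "B = 2 * \<gamma> * norm s"
  define R where "R = 1 + A + B"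
  define lo where "lo = hxs - norm s * (R + norm (y - xs))"
  have "{(z, r). h z \<le> ereal r \<and> r + (norm (z - y))\<^sup>2 / (2 * \<gamma>) \<le> C} \<subseteq> cball y R \<times> {lo..C}"
  proof safe
    fix z r
    assume "h z \<le> ereal r" and rC: "r + (norm (z - y))\<^sup>2 / (2 * \<gamma>) \<le> C"
    then have lin: "hxs + s \<bullet> (z - xs) \<le> r"
      using order_trans[OF subgradient] by fastforce
    have split: "s \<bullet> (z - xs) = s \<bullet> (y - xs) + s \<bullet> (z - y)"
      by (simp add: inner_diff_right)
    have cs: "\<bar>s \<bullet> (z - y)\<bar> \<le> norm s * norm (z - y)"
      by (rule Cauchy_Schwarz_ineq2)
    have "(norm (z - y))\<^sup>2 / (2 * \<gamma>) \<le> (C - hxs - s \<bullet> (y - xs)) - s \<bullet> (z - y)"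
      using lin rC split by linarith
    then have "(norm (z - y))\<^sup>2 \<le> 2 * \<gamma> * ((C - hxs - s \<bullet> (y - xs)) - s \<bullet> (z - y))"
      using gamma_pos by (simp add: divide_le_eq mult.commute)
    also have "\<dots> \<le> 2 * \<gamma> * (\<bar>C - hxs - s \<bullet> (y - xs)\<bar> + norm s * norm (z - y))"
      using gamma_pos cs by (intro mult_left_mono) auto
    also have "\<dots> = A + B * norm (z - y)"
      by (simp add: A_def B_def algebra_simps)
    finally have zR: "norm (z - y) \<le> R"
      unfolding R_def using gamma_pos by (intro le_of_square_le_affine) (auto simp: A_def B_def)
    then show "z \<in> cball y R"
      by (simp add: dist_norm norm_minus_commute)
    have "norm (z - xs) \<le> R + norm (y - xs)"
      using norm_triangle_ineq[of "z - y" "y - xs"] zR by simp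
    then have "norm s * norm (z - xs) \<le> norm s * (R + norm (y - xs))"
      by (simp add: mult_left_mono)
    moreover have "0 \<le> (norm (z - y))\<^sup>2 / (2 * \<gamma>)"
      using gamma_pos by simp
    ultimately show "r \<in> {lo..C}"
      using lin rC Cauchy_Schwarz_ineq2[of s "z - xs"] by (auto simp: lo_def)
  qed
  then show ?thesis
    by (rule bounded_subset[rotated]) (intro bounded_Times bounded_cball bounded_closed_interval)
qed

lemma objective_has_minimiser: "\<exists>q. \<forall>z. objective y q \<le> objective y z"
proof -
  define val where "val q = snd q + (norm (fst q - y))\<^sup>2 / (2 * \<gamma>)" for q :: "'a \<times> real"
  define C where "C = val (xs, hxs)"
  define K where "K = {(z, r). h z \<le> ereal r \<and> r + (norm (z - y))\<^sup>2 / (2 * \<gamma>) \<le> C}"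
  have "K = {(z, r). h z \<le> ereal r} \<inter> {q. val q \<le> C}"
    by (auto simp: K_def val_def)
  moreover have "closed {(z, r::real). h z \<le> ereal r}"
    using closed unfolding closed_fun_def .
  moreover have "closed {q. val q \<le> C}"
    unfolding val_def using gamma_pos by (intro closed_Collect_le continuous_intros) auto
  ultimately have "compact K"
    using bounded_sublevel_epigraph[of y C]
    by (simp add: compact_eq_bounded_closed closed_Int K_def)
  moreover have "(xs, hxs) \<in> K"
    by (simp add: K_def value_at C_def val_def)
  moreover have "continuous_on K val"
    unfolding val_def using gamma_pos by (intro continuous_intros) auto
  ultimately obtain zm rm where min: "(zm, rm) \<in> K" "\<And>q. q \<in> K \<Longrightarrow> val (zm, rm) \<le> val q"
    using continuous_attains_inf[of K val] by (metis empty_iff prod.exhaust)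
  have "objective y zm \<le> objective y z" for z
  proof (cases "h z")
    case (real r)
    have "val (zm, rm) \<le> val (z, r)"
      using min by (cases "val (z, r) \<le> C") (auto simp: K_def real val_def)
    moreover have "objective y zm \<le> ereal rm + ereal ((norm (zm - y))\<^sup>2 / (2 * \<gamma>))"
      unfolding objective_def using min(1) by (intro add_right_mono) (auto simp: K_def)
    ultimately show ?thesis
      unfolding objective_def real val_def by (auto elim!: order_trans)
  qed (use not_minf in \<open>auto simp: objective_def\<close>)
  then show ?thesis by blast
qed

lemma minimiser_finite:
  assumes "\<forall>z. objective y q \<le> objective y z"
  shows "h q \<noteq> \<infinity>"
  using assms[rule_format, of xs] by (auto simp: objective_def value_at)

lemma minimiser_subgradient:
  assumes min: "\<forall>z. objective y q \<le> objective y z" and hq: "h q = ereal a"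
  shows "ereal (a + (y - q) \<bullet> (z - q) / \<gamma>) \<le> h z"
proof (cases "h z")
  case (real b)
  define P where "P = (q - y) \<bullet> (z - q)"
  define M where "M = (norm (z - q))\<^sup>2 / (2 * \<gamma>)"
  have "a \<le> b + P / \<gamma> + t * M" if t: "0 < t" "t \<le> 1" for t
  proof -
    define zt where "zt = t *\<^sub>R z + (1 - t) *\<^sub>R q"
    have "h zt \<le> ereal t * h z + ereal (1 - t) * h q"
      using convex t unfolding convex_fun_def zt_def by auto
    then have "h zt \<le> ereal (t * b + (1 - t) * a)"
      by (simp add: real hq)
    with min[rule_format, of zt]
    have "a + (norm (q - y))\<^sup>2 / (2 * \<gamma>) \<le> t * b + (1 - t) * a + (norm (zt - y))\<^sup>2 / (2 * \<gamma>)"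
      unfolding objective_def hq by (cases "h zt") auto
    moreover have "zt - y = (q - y) + t *\<^sub>R (z - q)"
      by (simp add: zt_def algebra_simps)
    then have "(norm (zt - y))\<^sup>2 = (norm (q - y))\<^sup>2 + 2 * t * P + t\<^sup>2 * (norm (z - q))\<^sup>2"
      unfolding P_def by (simp only: norm_add_square) (simp add: power_mult_distrib)
    then have "(norm (zt - y))\<^sup>2 / (2 * \<gamma>) = (norm (q - y))\<^sup>2 / (2 * \<gamma>) + t * (P / \<gamma>) + t * (t * M)"
      using gamma_pos by (simp add: M_def power2_eq_square field_simps)
    ultimately have "t * a \<le> t * (b + P / \<gamma> + t * M)"
      by (simp add: algebra_simps)
    then show ?thesis using t by simp
  qed
  then have "a \<le> b + P / \<gamma>"
    by (rule le_of_forall_le_add_mult)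
  moreover have "(y - q) \<bullet> (z - q) = - P"
    unfolding P_def by (simp add: inner_diff_left)
  ultimately show ?thesis by (simp add: real)
qed (use not_minf in auto)

lemma minimiser_unique:
  assumes "\<forall>z. objective y q1 \<le> objective y z" and "\<forall>z. objective y q2 \<le> objective y z"
  shows "q1 = q2"
proof -
  obtain a1 a2 where a: "h q1 = ereal a1" "h q2 = ereal a2"
    using assms[THEN minimiser_finite] not_minf by (metis ereal_cases)
  have "0 \<le> ((1 / \<gamma>) *\<^sub>R (y - q1) - (1 / \<gamma>) *\<^sub>R (y - q2)) \<bullet> (q1 - q2)"
    using minimiser_subgradient[OF assms(1) a(1), of q2] minimiser_subgradient[OF assms(2) a(2), of q1]
    by (intro subgradient_monotone[of a1 _ _ _ a2]) (auto simp: a)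
  also have "(1 / \<gamma>) *\<^sub>R (y - q1) - (1 / \<gamma>) *\<^sub>R (y - q2) = - (1 / \<gamma>) *\<^sub>R (q1 - q2)"
    by (simp add: algebra_simps)
  finally have "0 \<le> - (norm (q1 - q2))\<^sup>2 / \<gamma>"
    by (simp add: power2_norm_eq_inner)
  then show ?thesis using gamma_pos by (simp add: divide_le_0_iff)
qed

lemma prox_minimises: "objective y (prox h \<gamma> y) \<le> objective y z"
proof -
  have "\<exists>!q. \<forall>z. objective y q \<le> objective y z"
    using objective_has_minimiser minimiser_unique by blast
  then have "\<forall>z. objective y (THE q. \<forall>z. objective y q \<le> objective y z) \<le> objective y z"
    by (rule theI')
  then show ?thesis unfolding prox_def objective_def by blast
qed

text \<open>Since \<open>xs = prox h \<gamma> (xs + \<gamma> s)\<close>, this is nonexpansiveness of the proximal map.\<close>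
lemma norm_prox_diff_le: "norm (prox h \<gamma> y - xs) \<le> norm (y - (xs + \<gamma> *\<^sub>R s))"
proof -
  define q where "q = prox h \<gamma> y"
  have min: "\<forall>z. objective y q \<le> objective y z"
    unfolding q_def using prox_minimises by blast
  then obtain a where a: "h q = ereal a"
    using minimiser_finite not_minf by (metis ereal_cases)
  have "0 \<le> ((1 / \<gamma>) *\<^sub>R (y - q) - s) \<bullet> (q - xs)"
    using minimiser_subgradient[OF min a, of xs] subgradient[of q]
    by (intro subgradient_monotone[of a _ _ _ hxs]) (auto simp: a value_at)
  moreover have "y - q - \<gamma> *\<^sub>R s = \<gamma> *\<^sub>R ((1 / \<gamma>) *\<^sub>R (y - q) - s)"
    using gamma_pos by (simp add: algebra_simps)
  ultimately have "0 \<le> (y - q - \<gamma> *\<^sub>R s) \<bullet> (q - xs)"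
    using gamma_pos by simp
  then have "(norm (q - xs))\<^sup>2 \<le> (y - (xs + \<gamma> *\<^sub>R s)) \<bullet> (q - xs)"
    by (simp add: power2_norm_eq_inner inner_diff_left inner_add_left)
  then show ?thesis
    unfolding q_def[symmetric] by (rule norm_le_of_square_le_inner)
qed

end

lemma minimiser_composite_subgradient:
  fixes f :: "'a::real_inner \<Rightarrow> real" and h :: "'a \<Rightarrow> ereal"
  assumes convex: "convex_fun h" and hx: "h x = ereal a"
    and upper: "\<And>z. f z \<le> f x + p \<bullet> (z - x) + L / 2 * (norm (z - x))\<^sup>2"
    and min: "\<And>z. ereal (f x) + h x \<le> ereal (f z) + h z"
  shows "ereal (a - p \<bullet> (z - x)) \<le> h z"
proof (cases "h z")
  case (real b)
  have "a \<le> b + p \<bullet> (z - x) + t * (L / 2 * (norm (z - x))\<^sup>2)" if t: "0 < t" "t \<le> 1" for t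
  proof -
    define zt where "zt = t *\<^sub>R z + (1 - t) *\<^sub>R x"
    have d: "zt - x = t *\<^sub>R (z - x)"
      by (simp add: zt_def algebra_simps)
    have "h zt \<le> ereal t * h z + ereal (1 - t) * h x"
      using convex t unfolding convex_fun_def zt_def by auto
    then have "h zt \<le> ereal (t * b + (1 - t) * a)"
      by (simp add: real hx)
    with min[of zt] have "f x + a \<le> f zt + (t * b + (1 - t) * a)"
      unfolding hx by (cases "h zt") auto
    moreover have "f zt \<le> f x + t * (p \<bullet> (z - x)) + t\<^sup>2 * (L / 2 * (norm (z - x))\<^sup>2)"
      using upper[of zt] unfolding d by (simp add: power_mult_distrib mult.left_commute)
    ultimately have "t * a \<le> t * (b + p \<bullet> (z - x) + t * (L / 2 * (norm (z - x))\<^sup>2))"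
      by (simp add: algebra_simps power2_eq_square)
    then show ?thesis using t by simp
  qed
  then have "a \<le> b + p \<bullet> (z - x)"
    by (rule le_of_forall_le_add_mult)
  then show ?thesis using real by simp
next
  case MInf
  then show ?thesis using min[of z] by (simp add: hx)
qed simp

section \<open>Finite sums and averages over index sequences\<close>

lemma sum_norm_add_square:
  fixes c :: "'a::real_inner" and w :: "'b \<Rightarrow> 'a"
  shows "(\<Sum>j\<in>I. (norm (c + w j))\<^sup>2)
    = real (card I) * (norm c)\<^sup>2 + 2 * (c \<bullet> sum w I) + (\<Sum>j\<in>I. (norm (w j))\<^sup>2)"
  by (simp add: norm_add_square sum.distrib sum_distrib_left inner_sum_right)

lemma sum_norm_diff_mean_square:
  fixes Z :: "nat \<Rightarrow> 'a::real_inner"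
  assumes "0 < n"
  defines "Zm \<equiv> (1 / real n) *\<^sub>R sum Z {..<n}"
  shows "(\<Sum>j<n. (norm (Z j - Zm))\<^sup>2) = (\<Sum>j<n. (norm (Z j))\<^sup>2) - real n * (norm Zm)\<^sup>2"
proof -
  have "sum Z {..<n} = real n *\<^sub>R Zm"
    using assms by (simp add: Zm_def)
  then show ?thesis
    using sum_norm_add_square[of "- Zm" Z "{..<n}"]
    by (simp add: power2_norm_eq_inner algebra_simps)
qed

lemma norm_diff_square_le_weighted:
  fixes a b :: "'a::real_inner"
  assumes "0 < \<beta>"
  shows "(norm (a - b))\<^sup>2 \<le> (1 + \<beta>) * (norm a)\<^sup>2 + (1 + 1 / \<beta>) * (norm b)\<^sup>2"
proof -
  have "0 \<le> (norm (\<beta> *\<^sub>R a + b))\<^sup>2 / \<beta>"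
    using assms by simp
  also have "\<dots> = \<beta> * (norm a)\<^sup>2 + 2 * (a \<bullet> b) + (1 / \<beta>) * (norm b)\<^sup>2"
    using assms unfolding norm_add_square by (simp add: power_mult_distrib power2_eq_square field_simps)
  finally show ?thesis
    by (simp add: norm_diff_square algebra_simps)
qed

text \<open>The SAGA direction \<open>Y j - X j + mean X\<close> averages to \<open>mean Y\<close>, so only the deviations from
  the means are split by the weighted Young inequality.\<close>
lemma sum_norm_saga_direction_square_le:
  fixes Y X :: "nat \<Rightarrow> 'a::real_inner"
  assumes n: "0 < n" and \<beta>: "0 < \<beta>"
  defines "Xm \<equiv> (1 / real n) *\<^sub>R sum X {..<n}" and "Ym \<equiv> (1 / real n) *\<^sub>R sum Y {..<n}"
  shows "(\<Sum>j<n. (norm (Y j - X j + Xm))\<^sup>2)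
    \<le> (1 + \<beta>) * (\<Sum>j<n. (norm (Y j))\<^sup>2) - real n * \<beta> * (norm Ym)\<^sup>2
       + (1 + 1 / \<beta>) * (\<Sum>j<n. (norm (X j))\<^sup>2)"
proof -
  define w where "w j = (Y j - Ym) - (X j - Xm)" for j
  have "sum w {..<n} = 0"
    using n by (simp add: w_def Xm_def Ym_def sum_subtractf sum_constant_scaleR)
  then have "(\<Sum>j<n. (norm (Y j - X j + Xm))\<^sup>2) = real n * (norm Ym)\<^sup>2 + (\<Sum>j<n. (norm (w j))\<^sup>2)"
    using sum_norm_add_square[of Ym w "{..<n}"] by (simp add: w_def algebra_simps)
  also have "(\<Sum>j<n. (norm (w j))\<^sup>2)
      \<le> (\<Sum>j<n. (1 + \<beta>) * (norm (Y j - Ym))\<^sup>2 + (1 + 1 / \<beta>) * (norm (X j - Xm))\<^sup>2)"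
    unfolding w_def by (intro sum_mono norm_diff_square_le_weighted \<beta>)
  also have "\<dots> = (1 + \<beta>) * ((\<Sum>j<n. (norm (Y j))\<^sup>2) - real n * (norm Ym)\<^sup>2)
      + (1 + 1 / \<beta>) * ((\<Sum>j<n. (norm (X j))\<^sup>2) - real n * (norm Xm)\<^sup>2)"
    using sum_norm_diff_mean_square[OF n, of X] sum_norm_diff_mean_square[OF n, of Y]
    by (simp add: Xm_def Ym_def sum.distrib sum_distrib_left[symmetric])
  also have "\<dots> \<le> (1 + \<beta>) * ((\<Sum>j<n. (norm (Y j))\<^sup>2) - real n * (norm Ym)\<^sup>2)
      + (1 + 1 / \<beta>) * (\<Sum>j<n. (norm (X j))\<^sup>2)"
    using \<beta> by (intro add_left_mono mult_left_mono) auto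
  finally show ?thesis by (simp add: algebra_simps)
qed

lemma sum_fun_upd_eq:
  fixes F :: "'i \<Rightarrow> 'b \<Rightarrow> 'c::ab_group_add"
  assumes "finite I" and "j \<in> I"
  shows "(\<Sum>i\<in>I. F i ((\<phi>(j := y)) i)) = (\<Sum>i\<in>I. F i (\<phi> i)) - F j (\<phi> j) + F j y"
proof -
  have "(\<Sum>i\<in>I - {j}. F i ((\<phi>(j := y)) i)) = (\<Sum>i\<in>I - {j}. F i (\<phi> i))"
    by (intro sum.cong) auto
  then show ?thesis
    using assms by (simp add: sum.remove[of I j] algebra_simps)
qed

lemma index_seqs_Suc:
  "index_seqs n (Suc k) = (\<lambda>(js, j). js @ [j]) ` (index_seqs n k \<times> {..<n})"
proof (intro equalityI subsetI)
  fix xs assume "xs \<in> index_seqs n (Suc k)"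
  then have xs: "length xs = Suc k" "set xs \<subseteq> {..<n}"
    by (auto simp: index_seqs_def)
  then obtain ys y where "xs = ys @ [y]"
    by (metis length_Suc_conv_rev)
  with xs show "xs \<in> (\<lambda>(js, j). js @ [j]) ` (index_seqs n k \<times> {..<n})"
    by (auto simp: index_seqs_def intro!: image_eqI[of _ _ "(ys, y)"])
qed (auto simp: index_seqs_def)

lemma sum_index_seqs_Suc:
  "(\<Sum>js\<in>index_seqs n (Suc k). X js) = (\<Sum>js\<in>index_seqs n k. \<Sum>j<n. X (js @ [j]))"
proof -
  have "inj_on (\<lambda>(js, j). js @ [j]) (index_seqs n k \<times> {..<n})"
    by (auto simp: inj_on_def)
  then have "(\<Sum>js\<in>index_seqs n (Suc k). X js) = (\<Sum>(js, j)\<in>index_seqs n k \<times> {..<n}. X (js @ [j]))"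
    unfolding index_seqs_Suc by (subst sum.reindex) (auto simp: case_prod_beta)
  also have "\<dots> = (\<Sum>js\<in>index_seqs n k. \<Sum>j<n. X (js @ [j]))"
    by (rule sum.cartesian_product[symmetric])
  finally show ?thesis .
qed

lemma expect_seq_foldl_le:
  assumes n: "0 < n" and \<rho>: "0 \<le> \<rho>"
    and step: "\<And>st. (\<Sum>j<n. T (step st j)) \<le> real n * \<rho> * T st"
  shows "expect_seq n k (\<lambda>js. T (foldl step s0 js)) \<le> \<rho> ^ k * T s0"
proof (induction k)
  case 0
  have "index_seqs n 0 = {[]}"
    by (auto simp: index_seqs_def)
  then show ?case by (simp add: expect_seq_def)
next
  case (Suc k)
  have "(\<Sum>js\<in>index_seqs n (Suc k). T (foldl step s0 js))
      = (\<Sum>js\<in>index_seqs n k. \<Sum>j<n. T (step (foldl step s0 js) j))"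
    by (simp add: sum_index_seqs_Suc)
  also have "\<dots> \<le> (\<Sum>js\<in>index_seqs n k. real n * \<rho> * T (foldl step s0 js))"
    by (intro sum_mono step)
  also have "\<dots> = real n * \<rho> * (\<Sum>js\<in>index_seqs n k. T (foldl step s0 js))"
    by (simp add: sum_distrib_left)
  finally have "expect_seq n (Suc k) (\<lambda>js. T (foldl step s0 js))
      \<le> real n * \<rho> * (\<Sum>js\<in>index_seqs n k. T (foldl step s0 js)) / real n ^ Suc k"
    unfolding expect_seq_def by (rule divide_right_mono) simp
  also have "\<dots> = \<rho> * expect_seq n k (\<lambda>js. T (foldl step s0 js))"
    using n by (simp add: expect_seq_def)
  also have "\<dots> \<le> \<rho> * (\<rho> ^ k * T s0)"
    using Suc.IH \<rho> by (rule mult_left_mono)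
  finally show ?case by simp
qed

lemma expect_seq_mono:
  assumes "\<And>js. X js \<le> Y js"
  shows "expect_seq n k X \<le> expect_seq n k Y"
  unfolding expect_seq_def by (intro divide_right_mono sum_mono assms) auto

lemma expect_seq_divide: "expect_seq n k (\<lambda>js. X js / c) = expect_seq n k X / c"
  unfolding expect_seq_def by (simp add: sum_divide_distrib[symmetric])

section \<open>Linear convergence of SAGA\<close>

locale saga_problem =
  fixes n :: nat and fs :: "nat \<Rightarrow> 'a::euclidean_space \<Rightarrow> real" and g :: "nat \<Rightarrow> 'a \<Rightarrow> 'a"
    and h :: "'a \<Rightarrow> ereal" and \<mu> L :: real and xstar :: 'a
  assumes n_pos: "0 < n" and mu_pos: "0 < \<mu>"
    and grad: "\<And>i x. i < n \<Longrightarrow> (fs i has_derivative (\<lambda>v. g i x \<bullet> v)) (at x)"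
    and lip: "\<And>i x y. i < n \<Longrightarrow> norm (g i x - g i y) \<le> L * norm (x - y)"
    and strongly_convex_fs: "\<And>i. i < n \<Longrightarrow> strongly_convex \<mu> (fs i)"
    and proper: "proper_fun h" and closed: "closed_fun h" and convex: "convex_fun h"
    and minimiser: "\<And>x. ereal ((1 / real n) * (\<Sum>i<n. fs i xstar)) + h xstar
                          \<le> ereal ((1 / real n) * (\<Sum>i<n. fs i x)) + h x"
begin

definition avg_f :: "'a \<Rightarrow> real" where
  "avg_f x = (1 / real n) * (\<Sum>i<n. fs i x)"

definition avg_grad :: "'a \<Rightarrow> 'a" where
  "avg_grad x = (1 / real n) *\<^sub>R (\<Sum>i<n. g i x)"

lemma fs_lower_bound: "i < n \<Longrightarrow> fs i a + g i a \<bullet> (b - a) + \<mu> / 2 * (norm (b - a))\<^sup>2 \<le> fs i b"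
  using strongly_convex_gradient_lower_bound strongly_convex_fs grad by blast

lemma fs_upper_bound: "i < n \<Longrightarrow> fs i b \<le> fs i a + g i a \<bullet> (b - a) + L / 2 * (norm (b - a))\<^sup>2"
  using lipschitz_gradient_upper_bound grad lip by blast

lemma mu_le_L: "\<mu> \<le> L"
  using strong_convexity_le_smoothness[of "fs 0" "g 0"] fs_lower_bound fs_upper_bound n_pos by blast

lemma L_pos: "0 < L"
  using mu_le_L mu_pos by simp

lemma avg_upper_bound: "avg_f b \<le> avg_f a + avg_grad a \<bullet> (b - a) + L / 2 * (norm (b - a))\<^sup>2"
proof -
  have "(\<Sum>i<n. fs i b) \<le> (\<Sum>i<n. fs i a + g i a \<bullet> (b - a) + L / 2 * (norm (b - a))\<^sup>2)"
    by (intro sum_mono fs_upper_bound) simp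
  also have "\<dots> = (\<Sum>i<n. fs i a) + (\<Sum>i<n. g i a) \<bullet> (b - a) + real n * (L / 2 * (norm (b - a))\<^sup>2)"
    by (simp add: sum.distrib inner_sum_left)
  also have "\<dots> = real n * (avg_f a + avg_grad a \<bullet> (b - a) + L / 2 * (norm (b - a))\<^sup>2)"
    using n_pos by (simp add: avg_f_def avg_grad_def distrib_left)
  finally show ?thesis
    unfolding avg_f_def[of b] using n_pos by (simp add: pos_divide_le_eq mult.commute)
qed

definition bregman :: "nat \<Rightarrow> 'a \<Rightarrow> real" where
  "bregman i z = fs i z - fs i xstar - g i xstar \<bullet> (z - xstar)"

definition grad_dev :: "nat \<Rightarrow> 'a \<Rightarrow> 'a" where
  "grad_dev i z = g i z - g i xstar"

lemma bregman_nonneg: "i < n \<Longrightarrow> 0 \<le> bregman i z"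
  using fs_lower_bound[of i xstar z] mu_pos unfolding bregman_def
  by (smt (verit) divide_nonneg_pos mult_nonneg_nonneg zero_le_power2)

lemma sum_bregman_nonneg: "0 \<le> (\<Sum>i<n. bregman i (z i))"
  by (intro sum_nonneg bregman_nonneg) simp

lemma norm_grad_dev_square_le: "i < n \<Longrightarrow> (norm (grad_dev i z))\<^sup>2 \<le> 2 * L * bregman i z"
  using cocoercive_shifted_gradient[of "fs i" "g i" \<mu> L 0 z xstar] fs_lower_bound fs_upper_bound mu_pos L_pos
  by (simp add: grad_dev_def bregman_def)

lemma inner_grad_dev_ge:
  assumes "i < n"
  shows "2 * (L - \<mu>) * bregman i x + \<mu> * L * (norm (x - xstar))\<^sup>2 + (norm (grad_dev i x))\<^sup>2
    \<le> 2 * L * (grad_dev i x \<bullet> (x - xstar))"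
proof -
  define Y D where "Y = grad_dev i x" and "D = x - xstar"
  have "(norm (g i xstar - g i x - \<mu> *\<^sub>R (xstar - x)))\<^sup>2
      \<le> 2 * (L - \<mu>) * (fs i xstar - fs i x - g i x \<bullet> (xstar - x) - \<mu> / 2 * (norm (xstar - x))\<^sup>2)"
    using cocoercive_shifted_gradient[of "fs i" "g i" \<mu> L \<mu> xstar x] fs_lower_bound fs_upper_bound assms mu_le_L
    by simp
  moreover have "g i xstar - g i x - \<mu> *\<^sub>R (xstar - x) = \<mu> *\<^sub>R D - Y"
    by (simp add: Y_def D_def grad_dev_def algebra_simps)
  moreover have "fs i xstar - fs i x - g i x \<bullet> (xstar - x) = Y \<bullet> D - bregman i x"
    by (simp add: Y_def D_def grad_dev_def bregman_def inner_diff_left inner_diff_right)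
  moreover have "norm (xstar - x) = norm D"
    by (simp add: D_def norm_minus_commute)
  ultimately have ineq: "(norm (\<mu> *\<^sub>R D - Y))\<^sup>2 \<le> 2 * (L - \<mu>) * (Y \<bullet> D - bregman i x - \<mu> / 2 * (norm D)\<^sup>2)"
    by simp
  have "(norm (\<mu> *\<^sub>R D - Y))\<^sup>2 = \<mu>\<^sup>2 * (norm D)\<^sup>2 - 2 * \<mu> * (Y \<bullet> D) + (norm Y)\<^sup>2"
    unfolding norm_diff_square by (simp add: power_mult_distrib inner_commute)
  moreover have "2 * (L - \<mu>) * bregman i x + \<mu> * L * (norm D)\<^sup>2 + (norm Y)\<^sup>2 - 2 * L * (Y \<bullet> D)
      = (\<mu>\<^sup>2 * (norm D)\<^sup>2 - 2 * \<mu> * (Y \<bullet> D) + (norm Y)\<^sup>2)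
        - 2 * (L - \<mu>) * (Y \<bullet> D - bregman i x - \<mu> / 2 * (norm D)\<^sup>2)"
    by (simp add: power2_eq_square field_simps)
  ultimately show ?thesis
    using ineq unfolding Y_def[symmetric] D_def[symmetric] by (simp add: inner_commute)
qed

lemma sum_bregman_le_norm_mean_grad_dev:
  "2 * \<mu> * (\<Sum>i<n. bregman i x) \<le> real n * (norm ((1 / real n) *\<^sub>R (\<Sum>i<n. grad_dev i x)))\<^sup>2"
proof -
  define D Ym where "D = x - xstar" and "Ym = (1 / real n) *\<^sub>R (\<Sum>i<n. grad_dev i x)"
  have "bregman i x \<le> grad_dev i x \<bullet> D - \<mu> / 2 * (norm D)\<^sup>2" if "i < n" for i
    using fs_lower_bound[OF that, of x xstar]
    by (simp add: bregman_def grad_dev_def D_def inner_diff_left inner_diff_right norm_minus_commute)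
  then have "(\<Sum>i<n. bregman i x) \<le> (\<Sum>i<n. grad_dev i x \<bullet> D - \<mu> / 2 * (norm D)\<^sup>2)"
    by (intro sum_mono) auto
  also have "\<dots> = real n * (Ym \<bullet> D) - real n * (\<mu> / 2 * (norm D)\<^sup>2)"
    using n_pos by (simp add: Ym_def sum_subtractf inner_sum_left)
  finally have "2 * \<mu> * (\<Sum>i<n. bregman i x)
      \<le> 2 * \<mu> * (real n * (Ym \<bullet> D) - real n * (\<mu> / 2 * (norm D)\<^sup>2))"
    using mu_pos by (intro mult_left_mono) auto
  also have "\<dots> = real n * (2 * \<mu> * (Ym \<bullet> D) - \<mu>\<^sup>2 * (norm D)\<^sup>2)"
    by (simp add: power2_eq_square algebra_simps)
  also have "\<dots> \<le> real n * (norm Ym)\<^sup>2"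
  proof (rule mult_left_mono)
    have "0 \<le> (norm (Ym - \<mu> *\<^sub>R D))\<^sup>2" by simp
    then show "2 * \<mu> * (Ym \<bullet> D) - \<mu>\<^sup>2 * (norm D)\<^sup>2 \<le> (norm Ym)\<^sup>2"
      unfolding norm_diff_square by (simp add: power_mult_distrib)
  qed simp
  finally show ?thesis by (simp add: Ym_def)
qed

lemma prox_subgradient_xstar:
  assumes "0 < \<gamma>"
  shows "prox_subgradient h \<gamma> xstar (- avg_grad xstar) (real_of_ereal (h xstar))"
proof -
  obtain z where "h z \<noteq> \<infinity>"
    using proper unfolding proper_fun_def by blast
  with minimiser[of z] have "h xstar \<noteq> \<infinity>"
    by auto
  moreover have "h xstar \<noteq> -\<infinity>"
    using proper unfolding proper_fun_def by blast
  ultimately have hx: "h xstar = ereal (real_of_ereal (h xstar))"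
    by (cases "h xstar") auto
  show ?thesis
  proof
    fix z
    show "ereal (real_of_ereal (h xstar) + - avg_grad xstar \<bullet> (z - xstar)) \<le> h z"
      using minimiser_composite_subgradient[OF convex hx avg_upper_bound minimiser[folded avg_f_def]]
      by simp
  qed (use closed convex assms hx in auto)
qed

lemma saga_step_dist_le:
  assumes "0 < \<gamma>"
  shows "norm (fst (saga_step n g h \<gamma> (x, \<phi>) j) - xstar)
    \<le> norm ((x - xstar) - \<gamma> *\<^sub>R (grad_dev j x - grad_dev j (\<phi> j) + (1 / real n) *\<^sub>R (\<Sum>i<n. grad_dev i (\<phi> i))))"
proof -
  interpret prox_subgradient h \<gamma> xstar "- avg_grad xstar" "real_of_ereal (h xstar)"
    using prox_subgradient_xstar[OF assms] .
  define w where "w = x - \<gamma> *\<^sub>R (g j x - g j (\<phi> j) + (1 / real n) *\<^sub>R (\<Sum>i<n. g i (\<phi> i)))"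
  have "norm (prox h \<gamma> w - xstar) \<le> norm (w - (xstar - \<gamma> *\<^sub>R avg_grad xstar))"
    using norm_prox_diff_le[of w] by simp
  also have "w - (xstar - \<gamma> *\<^sub>R avg_grad xstar)
      = (x - xstar) - \<gamma> *\<^sub>R (grad_dev j x - grad_dev j (\<phi> j) + (1 / real n) *\<^sub>R (\<Sum>i<n. grad_dev i (\<phi> i)))"
    by (simp add: w_def grad_dev_def avg_grad_def sum_subtractf algebra_simps)
  finally show ?thesis
    by (simp add: saga_step_def Let_def w_def)
qed

lemma sum_saga_step_dist_le:
  fixes x :: 'a and \<phi> :: "nat \<Rightarrow> 'a"
  assumes "0 < \<gamma>" and "0 < \<beta>"
  defines "Y \<equiv> \<lambda>j. grad_dev j x" and "X \<equiv> \<lambda>j. grad_dev j (\<phi> j)"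
  shows "(\<Sum>j<n. (norm (fst (saga_step n g h \<gamma> (x, \<phi>) j) - xstar))\<^sup>2)
    \<le> real n * (norm (x - xstar))\<^sup>2 - 2 * \<gamma> * (\<Sum>j<n. Y j \<bullet> (x - xstar))
       + \<gamma>\<^sup>2 * ((1 + \<beta>) * (\<Sum>j<n. (norm (Y j))\<^sup>2)
                 - real n * \<beta> * (norm ((1 / real n) *\<^sub>R (\<Sum>j<n. Y j)))\<^sup>2
                 + (1 + 1 / \<beta>) * (\<Sum>j<n. (norm (X j))\<^sup>2))"
proof -
  define V where "V j = Y j - X j + (1 / real n) *\<^sub>R (\<Sum>i<n. X i)" for j
  have "(\<Sum>j<n. (norm (fst (saga_step n g h \<gamma> (x, \<phi>) j) - xstar))\<^sup>2)
      \<le> (\<Sum>j<n. (norm ((x - xstar) + (- \<gamma>) *\<^sub>R V j))\<^sup>2)"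
    using saga_step_dist_le[OF \<open>0 < \<gamma>\<close>]
    by (intro sum_mono power_mono) (auto simp: V_def X_def Y_def)
  also have "\<dots> = real n * (norm (x - xstar))\<^sup>2 + 2 * ((x - xstar) \<bullet> (\<Sum>j<n. (- \<gamma>) *\<^sub>R V j))
      + \<gamma>\<^sup>2 * (\<Sum>j<n. (norm (V j))\<^sup>2)"
    unfolding sum_norm_add_square by (simp add: power_mult_distrib sum_distrib_left)
  also have "(\<Sum>j<n. (- \<gamma>) *\<^sub>R V j) = - \<gamma> *\<^sub>R (\<Sum>j<n. Y j)"
  proof -
    have "(\<Sum>j<n. V j) = (\<Sum>j<n. Y j)"
      using n_pos by (simp add: V_def sum.distrib sum_subtractf sum_constant_scaleR)
    then show ?thesis by (simp add: sum_negf scaleR_sum_right[symmetric])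
  qed
  also have "(\<Sum>j<n. (norm (V j))\<^sup>2)
      \<le> (1 + \<beta>) * (\<Sum>j<n. (norm (Y j))\<^sup>2) - real n * \<beta> * (norm ((1 / real n) *\<^sub>R (\<Sum>j<n. Y j)))\<^sup>2
        + (1 + 1 / \<beta>) * (\<Sum>j<n. (norm (X j))\<^sup>2)"
    unfolding V_def by (rule sum_norm_saga_direction_square_le[OF n_pos \<open>0 < \<beta>\<close>])
  finally show ?thesis
    by (simp add: inner_sum_left inner_sum_right inner_commute mult_left_mono)
qed

definition step_size :: real where
  "step_size = 1 / (2 * (\<mu> * real n + L))"

definition young_weight :: real where
  "young_weight = (2 * \<mu> * real n + L) / L"

definition lyapunov_weight :: real where
  "lyapunov_weight = 1 / (2 * step_size * (1 - step_size * \<mu>) * real n)"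

context
  fixes s :: real
  defines "s \<equiv> \<mu> * real n + L"
begin

lemma mu_less_twice_s: "\<mu> < 2 * s"
proof -
  have "\<mu> \<le> \<mu> * real n"
    using n_pos mu_pos by simp
  then show ?thesis using L_pos mu_pos unfolding s_def by (smt (verit))
qed

lemma s_pos: "0 < s"
  using mu_less_twice_s mu_pos by simp

lemma step_size_eq: "step_size = 1 / (2 * s)"
  by (simp add: step_size_def s_def)

lemma contraction_eq: "1 - step_size * \<mu> = (2 * s - \<mu>) / (2 * s)"
  using s_pos by (simp add: step_size_eq diff_divide_distrib)

lemma young_weight_eq: "1 + young_weight = 2 * s / L"
  using L_pos by (simp add: young_weight_def s_def field_simps)

lemma inverse_young_weight_eq: "1 + 1 / young_weight = 2 * s / (2 * \<mu> * real n + L)"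
proof -
  have "0 < 2 * \<mu> * real n + L"
    using n_pos mu_pos L_pos by (simp add: add_pos_pos)
  then show ?thesis
    by (simp add: young_weight_def s_def field_simps)
qed

lemma lyapunov_weight_eq: "lyapunov_weight = 2 * s\<^sup>2 / ((2 * s - \<mu>) * real n)"
  unfolding lyapunov_weight_def contraction_eq using s_pos mu_less_twice_s n_pos
  by (simp add: step_size_eq power2_eq_square)

end

lemma step_size_pos: "0 < step_size"
  using s_pos by (simp add: step_size_eq)

lemma young_weight_pos: "0 < young_weight"
proof -
  have "0 < 2 * \<mu> * real n + L"
    using n_pos mu_pos L_pos by (simp add: add_pos_pos)
  then show ?thesis using L_pos by (simp add: young_weight_def)
qed

lemma contraction_pos: "0 < 1 - step_size * \<mu>"
  using s_pos mu_less_twice_s by (simp add: contraction_eq)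

lemma lyapunov_weight_pos: "0 < lyapunov_weight"
  using s_pos mu_less_twice_s n_pos by (simp add: lyapunov_weight_eq)

lemma inverse_lyapunov_weight_le: "1 / lyapunov_weight \<le> real n / (\<mu> * real n + L)"
proof -
  define s where "s = \<mu> * real n + L"
  have "1 / lyapunov_weight = (2 * s - \<mu>) * real n / (2 * s\<^sup>2)"
    by (simp add: lyapunov_weight_eq s_def)
  also have "\<dots> \<le> 2 * s * real n / (2 * s\<^sup>2)"
    using mu_pos by (intro divide_right_mono mult_right_mono) auto
  also have "\<dots> = real n / s"
    using s_pos[folded s_def] by (simp add: power2_eq_square)
  finally show ?thesis by (simp add: s_def)
qed

text \<open>These make the coefficients of \<open>\<parallel>Y j\<parallel>\<^sup>2\<close> and of the Bregman divergences at the current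
  iterate cancel in the one-step estimate.\<close>
lemma lyapunov_weight_identities:
  defines "\<gamma> \<equiv> step_size" and "\<beta> \<equiv> young_weight" and "c \<equiv> lyapunov_weight"
  shows "c * \<gamma>\<^sup>2 * (1 + \<beta>) = c * \<gamma> / L"
    and "c * \<gamma> / L * (2 * (L - \<mu>)) + c * \<gamma>\<^sup>2 * \<beta> * (2 * \<mu>) = 1 / real n"
proof -
  define s where "s = \<mu> * real n + L"
  have \<gamma>: "\<gamma> = 1 / (2 * s)"
    by (simp add: \<gamma>_def step_size_eq s_def)
  have \<beta>: "\<beta> = 2 * s / L - 1"
    using young_weight_eq by (simp add: \<beta>_def s_def)
  have "\<gamma> * (1 + \<beta>) = 1 / L"
    using s_pos L_pos by (simp add: \<gamma> \<beta> s_def)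
  then show "c * \<gamma>\<^sup>2 * (1 + \<beta>) = c * \<gamma> / L"
    by (simp add: power2_eq_square divide_inverse mult.assoc)
  have "\<gamma> * \<beta> = 1 / L - 1 / (2 * s)"
    using s_pos L_pos by (simp add: \<gamma> \<beta> s_def right_diff_distrib)
  then have "(L - \<mu>) / L + \<gamma> * \<beta> * \<mu> = 1 - \<gamma> * \<mu>"
    using L_pos by (simp add: \<gamma> diff_divide_distrib left_diff_distrib)
  moreover have "c * \<gamma> / L * (2 * (L - \<mu>)) + c * \<gamma>\<^sup>2 * \<beta> * (2 * \<mu>)
      = 2 * \<gamma> * c * ((L - \<mu>) / L + \<gamma> * \<beta> * \<mu>)"
    using L_pos by (simp add: power2_eq_square field_simps)
  ultimately have "c * \<gamma> / L * (2 * (L - \<mu>)) + c * \<gamma>\<^sup>2 * \<beta> * (2 * \<mu>) = 2 * \<gamma> * (1 - \<gamma> * \<mu>) * c"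
    by simp
  also have "\<dots> = 1 / real n"
    using step_size_pos contraction_pos n_pos
    by (simp add: c_def lyapunov_weight_def \<gamma>_def)
  finally show "c * \<gamma> / L * (2 * (L - \<mu>)) + c * \<gamma>\<^sup>2 * \<beta> * (2 * \<mu>) = 1 / real n" .
qed

lemma lyapunov_weight_inequality:
  defines "\<gamma> \<equiv> step_size" and "\<beta> \<equiv> young_weight" and "c \<equiv> lyapunov_weight"
  shows "c * \<gamma>\<^sup>2 * (1 + 1 / \<beta>) * (2 * L) \<le> 1 / real n - \<gamma> * \<mu>"
proof -
  define a where "a = \<mu> * real n"
  define s where "s = a + L"
  define P Q R where "P = 2 * s - \<mu>" and "Q = 2 * a + L" and "R = a + 2 * L"
  have a: "\<mu> \<le> a" "0 < a"
    using n_pos mu_pos by (auto simp: a_def)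
  have pos: "0 < s" "0 < P" "0 < Q" "0 < R" "0 < real n"
    using a L_pos n_pos by (auto simp: s_def P_def Q_def R_def)
  have \<gamma>: "\<gamma> = 1 / (2 * s)"
    by (simp add: \<gamma>_def step_size_eq s_def a_def)
  have "c * \<gamma>\<^sup>2 * (1 + 1 / \<beta>) * (2 * L)
      = 2 * s\<^sup>2 / (P * real n) * (1 / (2 * s))\<^sup>2 * (2 * s / Q) * (2 * L)"
    by (simp add: c_def \<beta>_def \<gamma> lyapunov_weight_eq inverse_young_weight_eq s_def a_def P_def Q_def
        mult.assoc)
  also have "\<dots> = 4 * s\<^sup>2 * L / (P * Q * (2 * s * real n))"
    using pos by (simp add: power2_eq_square field_simps)
  also have "\<dots> \<le> P * Q * R / (P * Q * (2 * s * real n))"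
  proof (rule divide_right_mono)
    have "R * Q * R \<le> P * Q * R"
      using a pos by (intro mult_right_mono) (auto simp: P_def R_def s_def)
    moreover have "R * Q * R - 4 * s\<^sup>2 * L = 2 * a ^ 3 + 5 * a\<^sup>2 * L + 4 * a * L\<^sup>2"
      by (simp add: R_def Q_def s_def algebra_simps power2_eq_square power3_eq_cube)
    moreover have "0 \<le> 2 * a ^ 3 + 5 * a\<^sup>2 * L + 4 * a * L\<^sup>2"
      using a L_pos by simp
    ultimately show "4 * s\<^sup>2 * L \<le> P * Q * R" by linarith
  qed (use pos in simp)
  also have "\<dots> = R / (2 * s * real n)"
    using pos by simp
  also have "\<dots> = 1 / real n - \<gamma> * \<mu>"
    using pos by (simp add: \<gamma> R_def s_def a_def field_simps)
  finally show ?thesis .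
qed

lemma lyapunov_combination:
  fixes Enew Cor Ysq Ymean Xsq Bx Bphi d :: real
  defines "\<gamma> \<equiv> step_size" and "\<beta> \<equiv> young_weight" and "c \<equiv> lyapunov_weight"
  assumes dist: "Enew \<le> real n * d - 2 * \<gamma> * Cor
                    + \<gamma>\<^sup>2 * ((1 + \<beta>) * Ysq - real n * \<beta> * Ymean + (1 + 1 / \<beta>) * Xsq)"
    and cocoercive: "2 * (L - \<mu>) * Bx + real n * \<mu> * L * d + Ysq \<le> 2 * L * Cor"
    and gradient_bregman: "Xsq \<le> 2 * L * Bphi"
    and mean_bregman: "2 * \<mu> * Bx \<le> real n * Ymean"
    and Bphi_nonneg: "0 \<le> Bphi"
  shows "(real n * Bphi - Bphi + Bx) / real n + c * Enew \<le> (1 - \<gamma> * \<mu>) * (Bphi + real n * c * d)"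
proof -
  define k1 k2 k3 where "k1 = c * \<gamma> / L" and "k2 = c * \<gamma>\<^sup>2 * \<beta>"
    and "k3 = c * \<gamma>\<^sup>2 * (1 + 1 / \<beta>)"
  have k: "0 \<le> k1" "0 \<le> k2" "0 \<le> k3"
    using lyapunov_weight_pos step_size_pos young_weight_pos L_pos
    by (simp_all add: k1_def k2_def k3_def c_def \<gamma>_def \<beta>_def)
  have "c * Enew \<le> c * (real n * d - 2 * \<gamma> * Cor
                    + \<gamma>\<^sup>2 * ((1 + \<beta>) * Ysq - real n * \<beta> * Ymean + (1 + 1 / \<beta>) * Xsq))"
    using dist lyapunov_weight_pos by (simp add: c_def)
  also have "\<dots> = c * real n * d - 2 * (c * \<gamma>) * Cor + (c * \<gamma>\<^sup>2 * (1 + \<beta>)) * Ysq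
      - k2 * (real n * Ymean) + k3 * Xsq"
    by (simp add: k2_def k3_def algebra_simps)
  also have "c * \<gamma>\<^sup>2 * (1 + \<beta>) = k1"
    unfolding k1_def c_def \<gamma>_def \<beta>_def by (rule lyapunov_weight_identities(1))
  finally have E: "c * Enew \<le> c * real n * d - 2 * (c * \<gamma>) * Cor + k1 * Ysq - k2 * (real n * Ymean) + k3 * Xsq" .
  have "k1 * (2 * (L - \<mu>) * Bx + real n * \<mu> * L * d + Ysq) \<le> k1 * (2 * L * Cor)"
    using cocoercive k by (intro mult_left_mono) auto
  then have K: "k1 * (2 * (L - \<mu>)) * Bx + (c * \<gamma> * \<mu>) * (real n * d) + k1 * Ysq \<le> 2 * (c * \<gamma>) * Cor"
    using L_pos by (simp add: k1_def algebra_simps)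
  have M: "k2 * (2 * \<mu> * Bx) \<le> k2 * (real n * Ymean)"
    using mean_bregman k by (intro mult_left_mono) auto
  have X: "k3 * Xsq \<le> k3 * (2 * L * Bphi)"
    using gradient_bregman k by (intro mult_left_mono) auto
  have Bx: "k1 * (2 * (L - \<mu>)) * Bx + k2 * (2 * \<mu> * Bx) = Bx / real n"
    using arg_cong[OF lyapunov_weight_identities(2), of "\<lambda>u. u * Bx"]
    by (simp add: k1_def k2_def c_def \<gamma>_def \<beta>_def algebra_simps)
  have Bphi: "k3 * (2 * L * Bphi) \<le> Bphi / real n - (\<gamma> * \<mu>) * Bphi"
    using mult_right_mono[OF lyapunov_weight_inequality Bphi_nonneg]
    by (simp add: k3_def c_def \<gamma>_def \<beta>_def algebra_simps)
  have "(real n * Bphi - Bphi + Bx) / real n = Bphi - Bphi / real n + Bx / real n"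
    using n_pos by (simp add: field_simps)
  moreover have "(1 - \<gamma> * \<mu>) * (Bphi + real n * c * d)
      = Bphi - (\<gamma> * \<mu>) * Bphi + c * real n * d - (c * \<gamma> * \<mu>) * (real n * d)"
    by (simp add: algebra_simps)
  ultimately show ?thesis
    using E K M X Bx Bphi by linarith
qed

definition lyapunov :: "real \<Rightarrow> 'a \<times> (nat \<Rightarrow> 'a) \<Rightarrow> real" where
  "lyapunov c st = (1 / real n) * (\<Sum>i<n. bregman i (snd st i)) + c * (norm (fst st - xstar))\<^sup>2"

lemma sum_lyapunov_saga_step:
  "(\<Sum>j<n. lyapunov c (saga_step n g h \<gamma> (x, \<phi>) j))
    = (real n * (\<Sum>i<n. bregman i (\<phi> i)) - (\<Sum>i<n. bregman i (\<phi> i)) + (\<Sum>j<n. bregman j x)) / real n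
      + c * (\<Sum>j<n. (norm (fst (saga_step n g h \<gamma> (x, \<phi>) j) - xstar))\<^sup>2)"
proof -
  have "(\<Sum>j<n. \<Sum>i<n. bregman i ((\<phi>(j := x)) i))
      = (\<Sum>j<n. (\<Sum>i<n. bregman i (\<phi> i)) - bregman j (\<phi> j) + bregman j x)"
    by (intro sum.cong refl sum_fun_upd_eq) auto
  also have "\<dots> = real n * (\<Sum>i<n. bregman i (\<phi> i)) - (\<Sum>i<n. bregman i (\<phi> i)) + (\<Sum>j<n. bregman j x)"
    by (simp add: sum.distrib sum_subtractf)
  finally have "(\<Sum>j<n. \<Sum>i<n. bregman i ((\<phi>(j := x)) i)) = \<dots>" .
  moreover have "(\<Sum>j<n. lyapunov c (saga_step n g h \<gamma> (x, \<phi>) j))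
      = (1 / real n) * (\<Sum>j<n. \<Sum>i<n. bregman i ((\<phi>(j := x)) i))
        + c * (\<Sum>j<n. (norm (fst (saga_step n g h \<gamma> (x, \<phi>) j) - xstar))\<^sup>2)"
    by (simp add: lyapunov_def saga_step_def Let_def sum.distrib sum_distrib_left)
  ultimately show ?thesis by simp
qed

lemma lyapunov_saga_step_le:
  "(\<Sum>j<n. lyapunov lyapunov_weight (saga_step n g h step_size st j))
    \<le> real n * (1 - step_size * \<mu>) * lyapunov lyapunov_weight st"
proof -
  obtain x \<phi> where st: "st = (x, \<phi>)" by (cases st)
  define d where "d = (norm (x - xstar))\<^sup>2"
  define Bx Bphi where "Bx = (\<Sum>j<n. bregman j x)" and "Bphi = (\<Sum>j<n. bregman j (\<phi> j))"
  define Enew where "Enew = (\<Sum>j<n. (norm (fst (saga_step n g h step_size (x, \<phi>) j) - xstar))\<^sup>2)"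
  define Cor where "Cor = (\<Sum>j<n. grad_dev j x \<bullet> (x - xstar))"
  define Ysq Xsq where "Ysq = (\<Sum>j<n. (norm (grad_dev j x))\<^sup>2)" and "Xsq = (\<Sum>j<n. (norm (grad_dev j (\<phi> j)))\<^sup>2)"
  define Ymean where "Ymean = (norm ((1 / real n) *\<^sub>R (\<Sum>j<n. grad_dev j x)))\<^sup>2"
  have dist: "Enew \<le> real n * d - 2 * step_size * Cor
      + step_size\<^sup>2 * ((1 + young_weight) * Ysq - real n * young_weight * Ymean + (1 + 1 / young_weight) * Xsq)"
    unfolding Enew_def d_def Cor_def Ysq_def Xsq_def Ymean_def
    by (rule sum_saga_step_dist_le[OF step_size_pos young_weight_pos])
  have "(\<Sum>j<n. 2 * (L - \<mu>) * bregman j x + \<mu> * L * d + (norm (grad_dev j x))\<^sup>2)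
      \<le> (\<Sum>j<n. 2 * L * (grad_dev j x \<bullet> (x - xstar)))"
    unfolding d_def by (intro sum_mono inner_grad_dev_ge) simp
  then have cocoercive: "2 * (L - \<mu>) * Bx + real n * \<mu> * L * d + Ysq \<le> 2 * L * Cor"
    by (simp add: Bx_def Cor_def Ysq_def sum.distrib sum_distrib_left)
  have "Xsq \<le> (\<Sum>j<n. 2 * L * bregman j (\<phi> j))"
    unfolding Xsq_def by (intro sum_mono norm_grad_dev_square_le) simp
  then have gradient_bregman: "Xsq \<le> 2 * L * Bphi"
    by (simp add: Bphi_def sum_distrib_left)
  have mean_bregman: "2 * \<mu> * Bx \<le> real n * Ymean"
    unfolding Bx_def Ymean_def by (rule sum_bregman_le_norm_mean_grad_dev)
  have "0 \<le> Bphi"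
    unfolding Bphi_def by (rule sum_bregman_nonneg)
  have "(\<Sum>j<n. lyapunov lyapunov_weight (saga_step n g h step_size (x, \<phi>) j))
      = (real n * Bphi - Bphi + Bx) / real n + lyapunov_weight * Enew"
    by (simp add: sum_lyapunov_saga_step Bphi_def Bx_def Enew_def)
  also have "\<dots> \<le> (1 - step_size * \<mu>) * (Bphi + real n * lyapunov_weight * d)"
    by (rule lyapunov_combination[OF dist cocoercive gradient_bregman mean_bregman \<open>0 \<le> Bphi\<close>])
  also have "\<dots> = real n * (1 - step_size * \<mu>) * lyapunov lyapunov_weight (x, \<phi>)"
    using n_pos by (simp add: lyapunov_def Bphi_def d_def field_simps)
  finally show ?thesis by (simp add: st)
qed

theorem saga_linear_convergence:
  "expect_seq n k (\<lambda>js. (norm (fst (saga_run n g h step_size x0 js) - xstar))\<^sup>2)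
    \<le> (1 - step_size * \<mu>) ^ k *
       ((norm (x0 - xstar))\<^sup>2
        + real n / (\<mu> * real n + L) * (avg_f x0 - avg_grad xstar \<bullet> (x0 - xstar) - avg_f xstar))"
proof -
  define c \<rho> where "c = lyapunov_weight" and "\<rho> = 1 - step_size * \<mu>"
  define D0 where "D0 = avg_f x0 - avg_grad xstar \<bullet> (x0 - xstar) - avg_f xstar"
  have D0: "D0 = (1 / real n) * (\<Sum>i<n. bregman i x0)"
    by (simp add: D0_def avg_f_def avg_grad_def bregman_def sum_subtractf inner_sum_left right_diff_distrib)
  then have "0 \<le> D0"
    using sum_bregman_nonneg[of "\<lambda>_. x0"] by simp
  have "(norm (fst st - xstar))\<^sup>2 \<le> lyapunov c st / c" for st
    using lyapunov_weight_pos sum_bregman_nonneg[of "snd st"]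
    by (simp add: lyapunov_def c_def pos_le_divide_eq)
  then have "expect_seq n k (\<lambda>js. (norm (fst (saga_run n g h step_size x0 js) - xstar))\<^sup>2)
      \<le> expect_seq n k (\<lambda>js. lyapunov c (saga_run n g h step_size x0 js)) / c"
    unfolding expect_seq_divide[symmetric] by (rule expect_seq_mono)
  also have "\<dots> \<le> \<rho> ^ k * lyapunov c (x0, \<lambda>_. x0) / c"
    using expect_seq_foldl_le[OF n_pos _ lyapunov_saga_step_le] contraction_pos lyapunov_weight_pos
    by (simp add: saga_run_def c_def \<rho>_def divide_right_mono)
  also have "\<dots> = \<rho> ^ k * ((norm (x0 - xstar))\<^sup>2 + 1 / c * D0)"
    using lyapunov_weight_pos by (simp add: lyapunov_def D0 c_def field_simps)
  also have "\<dots> \<le> \<rho> ^ k * ((norm (x0 - xstar))\<^sup>2 + real n / (\<mu> * real n + L) * D0)"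
    using inverse_lyapunov_weight_le contraction_pos \<open>0 \<le> D0\<close>
    by (intro mult_left_mono add_left_mono mult_right_mono) (auto simp: c_def \<rho>_def)
  finally show ?thesis by (simp add: \<rho>_def D0_def)
qed

end

theorem corollary1:
  fixes n :: nat and fs :: "nat \<Rightarrow> 'a::euclidean_space \<Rightarrow> real"
    and g :: "nat \<Rightarrow> 'a \<Rightarrow> 'a" and h :: "'a \<Rightarrow> ereal"
    and \<mu> L \<gamma> :: real and x0 xstar :: 'a and k :: nat
  defines "f \<equiv> (\<lambda>x. (1 / real n) * (\<Sum>i<n. fs i x))"
  defines "f' \<equiv> (\<lambda>x. (1 / real n) *\<^sub>R (\<Sum>i<n. g i x))"
  assumes n: "n \<ge> 1"
    and mu: "\<mu> > 0"
    and grad: "\<And>i x. i < n \<Longrightarrow> (fs i has_derivative (\<lambda>v. g i x \<bullet> v)) (at x)"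
    and lip: "\<And>i x y. i < n \<Longrightarrow> norm (g i x - g i y) \<le> L * norm (x - y)"
    and sc: "\<And>i. i < n \<Longrightarrow> strongly_convex \<mu> (fs i)"
    and h: "proper_fun h" "closed_fun h" "convex_fun h"
    and xstar: "\<And>x. ereal (f xstar) + h xstar \<le> ereal (f x) + h x"
    and gamma: "\<gamma> = 1 / (2 * (\<mu> * real n + L))"
  shows "expect_seq n k (\<lambda>js. (norm (fst (saga_run n g h \<gamma> x0 js) - xstar))\<^sup>2)
    \<le> (1 - \<mu> / (2 * (\<mu> * real n + L))) ^ k *
       ((norm (x0 - xstar))\<^sup>2
        + real n / (\<mu> * real n + L) * (f x0 - f' xstar \<bullet> (x0 - xstar) - f xstar))"
proof -
  interpret saga_problem n fs g h \<mu> L xstar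
    using n mu grad lip sc h xstar by unfold_locales (simp_all add: f_def)
  have "\<gamma> = step_size"
    by (simp add: gamma step_size_def)
  then show ?thesis
    using saga_linear_convergence[of k x0]
    by (simp add: f_def f'_def avg_f_def avg_grad_def step_size_def)
qed

end
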